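(* Let $\ell$ and $m$ be positive integers with $\ell\le m$, let $G$ be a group written additively, let $\mathbf{a}=(a_1,\dots,a_m)$ be a sequence of elements of $G$, and let $A$ be the set of distinct terms of $\mathbf{a}$. Then \[ |\Sigma^{\ell}(\mathbf{a})|\ \ge\ \min\Big(p(G),\ \sum_{a\in A}\mu_{\mathbf{a}}(a)-\ell+1\Big). \]
   Context: $p(G)$ is the order of the smallest nontrivial subgroup of $G$, or $\infty$ if no such subgroup exists. $\Sigma^{\ell}(\mathbf{a})$ is the set of all elements $a_{i_1}+\cdots+a_{i_\ell}$ with $i_1,\dots,i_\ell\in[1,m]$ pairwise distinct, taken in any order. $\rho_a(\mathbf{a})=|\{i\in[1,m]:a_i=a\}|$ and $\mu_{\mathbf{a}}(a)=\min(\ell,\rho_a(\mathbf{a}))$. *)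

theory Defs
  imports Main "HOL-Library.Extended_Nat"
begin

definition is_subgroup :: "'a::group_add set \<Rightarrow> bool" where
  "is_subgroup H \<longleftrightarrow> 0 \<in> H \<and> (\<forall>x\<in>H. \<forall>y\<in>H. x + y \<in> H) \<and> (\<forall>x\<in>H. - x \<in> H)"

text \<open>p(G): order of the smallest nontrivial subgroup, or infinity if none exists
  (an infinite subgroup has order infinity).\<close>
definition p_grp :: "'a::group_add itself \<Rightarrow> enat" where
  "p_grp _ = (INF H \<in> {H :: 'a set. is_subgroup H \<and> H \<noteq> {0}}.
                 (if finite H then enat (card H) else \<infinity>))"

definition Sigma_l :: "nat \<Rightarrow> nat \<Rightarrow> (nat \<Rightarrow> 'a::group_add) \<Rightarrow> 'a set" where
  "Sigma_l l m a = {sum_list (map a is) | is. distinct is \<and> length is = l \<and> set is \<subseteq> {1..m}}"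

definition rho :: "nat \<Rightarrow> (nat \<Rightarrow> 'a) \<Rightarrow> 'a \<Rightarrow> nat" where
  "rho m a x = card {i \<in> {1..m}. a i = x}"

definition mu :: "nat \<Rightarrow> nat \<Rightarrow> (nat \<Rightarrow> 'a) \<Rightarrow> 'a \<Rightarrow> nat" where
  "mu l m a x = min l (rho m a x)"

end

theory Submission
  imports Defs "HOL-Library.Set_Algebras"
begin

(* The engine is Kemperman's theorem |A + B| >= min (p(G), |A| + |B| - 1), valid in every group.
   If |A + B| < p(G), no nonempty set of size at most |A + B| is stable under a nonzero
   translation. So whenever x1 + y1 = x2 + y2 with y1 ~= y2, an e-transform along
   g = y1 - y2 yields a pair (X', Y') with X' + Y' inside X + Y that is either larger, or as
   large with a smaller second set; hence in a minimal counterexample all sums x + y are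
   distinct, which is absurd.

   The bound on Sigma^l follows by induction on l over arbitrary finite index sets I. Choose a
   set J of indices carrying distinct values, one for each value of multiplicity at least l
   (a single index if there is none). Then Sigma^(l-1)(I - J) + a(J) lies in Sigma^l(I),
   |J| <= |I| - l + 1, and deleting J lowers the mu-sum by at most |J|, so Kemperman's theorem
   applied to Sigma^(l-1)(I - J) and a(J) performs the induction step. *)

lemma elt_set_plus_eq_image: "g +o B = (+) g ` B"
  by (auto simp: elt_set_plus_def)

lemma p_grp_le_card_subgroup:
  fixes H :: "'a::group_add set"
  assumes "is_subgroup H" "H \<noteq> {0}" "finite H"
  shows "p_grp TYPE('a) \<le> enat (card H)"
  unfolding p_grp_def by (rule INF_lower2[of H]) (use assms in auto)

lemma is_subgroup_left_stabilizer:
  fixes B :: "'a::group_add set"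
  assumes "finite B"
  shows "is_subgroup {g. g +o B \<subseteq> B}"
  unfolding is_subgroup_def
proof (intro conjI ballI)
  fix g h assume "g \<in> {g. g +o B \<subseteq> B}" "h \<in> {g. g +o B \<subseteq> B}"
  then have "g +o (h +o B) \<subseteq> B" using set_plus_mono[of "h +o B" B g] by auto
  then show "g + h \<in> {g. g +o B \<subseteq> B}" by (simp add: set_plus_rearrange2)
next
  fix g assume "g \<in> {g. g +o B \<subseteq> B}"
  moreover have "card (g +o B) = card B"
    by (simp add: elt_set_plus_eq_image card_image)
  ultimately have "g +o B = B" using assms by (simp add: card_subset_eq)
  then have "- g +o B = (- g + g) +o B" by (metis set_plus_rearrange2)
  then show "- g \<in> {g. g +o B \<subseteq> B}" by (simp add: elt_set_plus_eq_image)
qed (simp add: elt_set_plus_eq_image)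

lemma card_left_stabilizer_le:
  fixes B :: "'a::group_add set"
  assumes "finite B" "b \<in> B"
  shows "finite {g. g +o B \<subseteq> B}" "card {g. g +o B \<subseteq> B} \<le> card B"
proof -
  have "{g. g +o B \<subseteq> B} \<subseteq> (\<lambda>y. y - b) ` B"
  proof
    fix g assume "g \<in> {g. g +o B \<subseteq> B}"
    then have "g + b \<in> B" using assms(2) by auto
    then show "g \<in> (\<lambda>y. y - b) ` B" by (rule rev_image_eqI) simp
  qed
  then show "finite {g. g +o B \<subseteq> B}" "card {g. g +o B \<subseteq> B} \<le> card B"
    using assms(1) finite_surj surj_card_le by blast+
qed

lemma p_grp_le_card_if_translation_invariant:
  fixes g :: "'a::group_add"
  assumes "finite B" "B \<noteq> {}" "g \<noteq> 0" "g +o B \<subseteq> B"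
  shows "p_grp TYPE('a) \<le> enat (card B)"
proof -
  obtain b where "b \<in> B" using assms(2) by blast
  note stab = card_left_stabilizer_le[OF assms(1) this]
  have "{g. g +o B \<subseteq> B} \<noteq> {0}" using assms(3,4) by blast
  then have "p_grp TYPE('a) \<le> enat (card {g. g +o B \<subseteq> B})"
    using p_grp_le_card_subgroup is_subgroup_left_stabilizer assms(1) stab(1) by blast
  also have "\<dots> \<le> enat (card B)" using stab(2) by simp
  finally show ?thesis .
qed

lemma card_Un_image_add_card_stable:
  assumes "finite X" "inj_on f X"
  shows "card (X \<union> f ` X) + card {x \<in> X. f x \<in> X} = 2 * card X"
proof -
  have "f ` {x \<in> X. f x \<in> X} = X \<inter> f ` X" by auto
  then have "card {x \<in> X. f x \<in> X} = card (X \<inter> f ` X)"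
    by (metis (no_types, lifting) assms(2) card_image inj_on_subset mem_Collect_eq subsetI)
  then show ?thesis
    using card_Un_Int[of X "f ` X"] assms(1) card_image[OF assms(2)] by simp
qed

lemma e_transform:
  fixes X Y :: "'a::group_add set"
  assumes "finite X" "finite Y" "x \<in> X" "x + g \<in> X" "y \<in> Y" "g + y \<in> Y"
    and "\<not> g +o Y \<subseteq> Y"
  obtains X' Y' where "finite X'" "finite Y'" "X' \<noteq> {}" "Y' \<noteq> {}" "X' + Y' \<subseteq> X + Y"
    "card X + card Y < card X' + card Y' \<or> card X + card Y \<le> card X' + card Y' \<and> card Y' < card Y"
proof -
  define X1 where "X1 = X \<union> (\<lambda>x. x + g) ` X"
  define Y1 where "Y1 = {y \<in> Y. g + y \<in> Y}"
  define X2 where "X2 = {x \<in> X. x + g \<in> X}"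
  define Y2 where "Y2 = Y \<union> (+) g ` Y"
  have card_X: "card X1 + card X2 = 2 * card X"
    unfolding X1_def X2_def by (rule card_Un_image_add_card_stable) (simp_all add: assms inj_on_def)
  have card_Y: "card Y2 + card Y1 = 2 * card Y"
    unfolding Y1_def Y2_def by (rule card_Un_image_add_card_stable) (simp_all add: assms inj_on_def)
  have sub1: "X1 + Y1 \<subseteq> X + Y"
  proof
    fix z assume "z \<in> X1 + Y1"
    then obtain u v where "z = u + v" "u \<in> X1" "v \<in> Y1" by (rule set_plus_elim)
    then show "z \<in> X + Y" unfolding X1_def Y1_def by (auto simp: add.assoc)
  qed
  have sub2: "X2 + Y2 \<subseteq> X + Y"
  proof
    fix z assume "z \<in> X2 + Y2"
    then obtain u v where "z = u + v" "u \<in> X2" "v \<in> Y2" by (rule set_plus_elim)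
    then show "z \<in> X + Y" unfolding X2_def Y2_def by (auto simp: add.assoc[symmetric])
  qed
  have "Y1 \<subset> Y" using assms(7) by (auto simp: Y1_def elt_set_plus_def)
  then have card_Y1: "card Y1 < card Y" by (rule psubset_card_mono[OF assms(2)])
  have fin: "finite X1" "finite Y1" "finite X2" "finite Y2"
    using assms(1,2) by (simp_all add: X1_def Y1_def X2_def Y2_def)
  have ne: "x \<in> X1" "y \<in> Y1" "x \<in> X2" "y \<in> Y2"
    using assms(3-6) by (simp_all add: X1_def Y1_def X2_def Y2_def)
  show thesis
  proof (cases "card X + card Y \<le> card X1 + card Y1")
    case True
    with card_Y1 show thesis using that[OF fin(1,2) _ _ sub1] ne(1,2) by blast
  next
    case False
    with card_X card_Y have "card X + card Y < card X2 + card Y2" by linarith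
    then show thesis using that[OF fin(3,4) _ _ sub2] ne(3,4) by blast
  qed
qed

lemma card_le_card_set_plus_left:
  fixes X Y :: "'a::cancel_semigroup_add set"
  assumes "finite X" "finite Y" "y \<in> Y"
  shows "card X \<le> card (X + Y)"
proof -
  have "card X = card ((\<lambda>x. x + y) ` X)" by (simp add: card_image inj_on_def)
  also have "\<dots> \<le> card (X + Y)"
    using assms by (intro card_mono) (auto simp: finite_set_plus)
  finally show ?thesis .
qed

lemma card_le_card_set_plus_right:
  fixes X Y :: "'a::cancel_semigroup_add set"
  assumes "finite X" "finite Y" "x \<in> X"
  shows "card Y \<le> card (X + Y)"
proof -
  have "card Y = card ((+) x ` Y)" by (simp add: card_image inj_on_def)
  also have "\<dots> \<le> card (X + Y)"
    using assms by (intro card_mono) (auto simp: finite_set_plus)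
  finally show ?thesis .
qed

lemma card_add_card_le_card_set_plus_if_inj:
  assumes "inj_on (\<lambda>(x, y). x + y) (X \<times> Y)" "finite X" "finite Y" "X \<noteq> {}" "Y \<noteq> {}"
  shows "card X + card Y \<le> card (X + Y) + 1"
proof -
  have "card (X + Y) = card X * card Y"
    using card_image[OF assms(1)] by (simp add: set_plus_image card_cartesian_product)
  moreover obtain u v where "card X = Suc u" "card Y = Suc v"
    using assms(2-5) by (metis card_0_eq not0_implies_Suc)
  ultimately show ?thesis by simp
qed

(* Induction along the lexicographic order of (2 |C| - |X| - |Y|, |Y|), which every
   e-transform decreases. *)
lemma kemperman_below_p:
  fixes C :: "'a::group_add set"
  assumes "finite C" "enat (card C) < p_grp TYPE('a)"
  shows "finite X \<Longrightarrow> finite Y \<Longrightarrow> X \<noteq> {} \<Longrightarrow> Y \<noteq> {} \<Longrightarrow> X + Y \<subseteq> C \<Longrightarrow>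
    card X + card Y \<le> card (X + Y) + 1"
proof (induction "(X, Y)" arbitrary: X Y
    rule: wf_induct_rule[OF wf_measures[of "[\<lambda>(X, Y). 2 * card C - (card X + card Y), \<lambda>(X, Y). card Y]"]])
  case (1 X Y)
  have card_le_C: "card X \<le> card C" "card Y \<le> card C" if "finite X" "finite Y" "X \<noteq> {}" "Y \<noteq> {}" "X + Y \<subseteq> C"
    for X Y :: "'a set"
    using that card_le_card_set_plus_left card_le_card_set_plus_right card_mono[OF assms(1)]
    by (meson ex_in_conv order_trans)+
  show ?case
  proof (rule ccontr)
    assume counterexample: "\<not> card X + card Y \<le> card (X + Y) + 1"
    have no_stable: "\<not> g +o Y \<subseteq> Y" if "g \<noteq> 0" for g
    proof
      assume "g +o Y \<subseteq> Y"
      then have "p_grp TYPE('a) \<le> enat (card Y)"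
        using p_grp_le_card_if_translation_invariant "1.prems"(2,4) that by blast
      also have "\<dots> \<le> enat (card C)" using card_le_C[OF "1.prems"] by simp
      finally show False using assms(2) by simp
    qed
    have same_summand: "y1 = y2" if mem: "x1 \<in> X" "y1 \<in> Y" "x2 \<in> X" "y2 \<in> Y" and "x1 + y1 = x2 + y2"
      for x1 y1 x2 y2
    proof (rule ccontr)
      assume "y1 \<noteq> y2"
      have "x1 + (y1 - y2) = (x1 + y1) - y2" by (rule add_diff_eq)
      then have "x1 + (y1 - y2) \<in> X" "(y1 - y2) + y2 \<in> Y" using that by simp_all
      moreover have "\<not> (y1 - y2) +o Y \<subseteq> Y" using no_stable \<open>y1 \<noteq> y2\<close> by simp
      ultimately obtain X' Y' where X'Y': "finite X'" "finite Y'" "X' \<noteq> {}" "Y' \<noteq> {}" "X' + Y' \<subseteq> X + Y"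
        and grows: "card X + card Y < card X' + card Y' \<or>
          card X + card Y \<le> card X' + card Y' \<and> card Y' < card Y"
        using e_transform[OF "1.prems"(1,2) mem(1) _ mem(4)] by blast
      have "X' + Y' \<subseteq> C" using X'Y'(5) "1.prems"(5) by blast
      note bounds = card_le_C[OF X'Y'(1-4) this] card_le_C[OF "1.prems"]
      have "card X' + card Y' \<le> card (X' + Y') + 1"
        using grows bounds by (intro "1.hyps"[OF _ X'Y'(1-4) \<open>X' + Y' \<subseteq> C\<close>]) auto
      moreover have "card (X' + Y') \<le> card (X + Y)"
        using X'Y'(5) "1.prems"(1,2) by (simp add: card_mono finite_set_plus)
      ultimately show False using counterexample grows by linarith
    qed
    have "inj_on (\<lambda>(x, y). x + y) (X \<times> Y)"
    proof (rule inj_onI, clarify)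
      fix x1 y1 x2 y2 assume "x1 \<in> X" "y1 \<in> Y" "x2 \<in> X" "y2 \<in> Y" "x1 + y1 = x2 + y2"
      with same_summand show "x1 = x2 \<and> y1 = y2" by (metis add_right_cancel)
    qed
    then show False
      using card_add_card_le_card_set_plus_if_inj "1.prems"(1-4) counterexample by blast
  qed
qed

theorem kemperman:
  fixes A B :: "'a::group_add set"
  assumes "finite A" "finite B" "A \<noteq> {}" "B \<noteq> {}"
  shows "min (p_grp TYPE('a)) (enat (card A + card B - 1)) \<le> enat (card (A + B))"
proof (cases "p_grp TYPE('a) \<le> enat (card (A + B))")
  case False
  then have "card A + card B \<le> card (A + B) + 1"
    using kemperman_below_p[of "A + B" A B] assms by (simp add: finite_set_plus not_le)
  then show ?thesis by (intro min.coboundedI2) simp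
qed (simp add: min.coboundedI1)

(* Sigma_l and the mu-sum over an arbitrary finite index set, so that the induction can
   delete indices. *)
definition Sigma_on :: "nat \<Rightarrow> nat set \<Rightarrow> (nat \<Rightarrow> 'a::monoid_add) \<Rightarrow> 'a set" where
  "Sigma_on l I a = {sum_list (map a js) | js. distinct js \<and> length js = l \<and> set js \<subseteq> I}"

definition rho_on :: "nat set \<Rightarrow> (nat \<Rightarrow> 'a) \<Rightarrow> 'a \<Rightarrow> nat" where
  "rho_on I a x = card {i \<in> I. a i = x}"

definition mu_sum :: "nat \<Rightarrow> nat set \<Rightarrow> (nat \<Rightarrow> 'a) \<Rightarrow> nat" where
  "mu_sum l I a = (\<Sum>x\<in>a ` I. min l (rho_on I a x))"

lemma Sigma_on_0 [simp]: "Sigma_on 0 I a = {0}"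
  by (auto simp: Sigma_on_def)

lemma finite_Sigma_on:
  assumes "finite I"
  shows "finite (Sigma_on l I a)"
proof -
  have "Sigma_on l I a \<subseteq> (\<lambda>js. sum_list (map a js)) ` {js. set js \<subseteq> I \<and> length js = l}"
    by (auto simp: Sigma_on_def)
  then show ?thesis
    by (rule finite_subset) (simp add: finite_lists_length_eq[OF assms])
qed

lemma Sigma_on_nonempty:
  assumes "finite I" "l \<le> card I"
  shows "Sigma_on l I a \<noteq> {}"
proof -
  obtain J where "J \<subseteq> I" "card J = l" "finite J"
    using obtain_subset_with_card_n[OF assms(2)] by blast
  then have "distinct (sorted_list_of_set J)" "length (sorted_list_of_set J) = l"
    "set (sorted_list_of_set J) \<subseteq> I"
    by simp_all
  then have "sum_list (map a (sorted_list_of_set J)) \<in> Sigma_on l I a"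
    unfolding Sigma_on_def by blast
  then show ?thesis by blast
qed

lemma set_plus_image_subset_Sigma_on_Suc:
  assumes "J \<subseteq> I"
  shows "Sigma_on l (I - J) a + a ` J \<subseteq> Sigma_on (Suc l) I a"
proof
  fix z assume "z \<in> Sigma_on l (I - J) a + a ` J"
  then obtain js j where "z = sum_list (map a js) + a j" "j \<in> J"
    and "distinct js" "length js = l" "set js \<subseteq> I - J"
    by (auto simp: Sigma_on_def elim!: set_plus_elim)
  then have "z = sum_list (map a (js @ [j]))" "distinct (js @ [j])" "length (js @ [j]) = Suc l"
    "set (js @ [j]) \<subseteq> I"
    using assms by auto
  then show "z \<in> Sigma_on (Suc l) I a" unfolding Sigma_on_def by blast
qed

lemma rho_on_Diff:
  assumes "J \<subseteq> I" "inj_on a J" "finite I"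
  shows "rho_on (I - J) a x = rho_on I a x - of_bool (x \<in> a ` J)"
proof (cases "x \<in> a ` J")
  case True
  then obtain j where "j \<in> J" "a j = x" by blast
  with assms have "{i \<in> I - J. a i = x} = {i \<in> I. a i = x} - {j}"
    by (auto dest: inj_onD)
  moreover have "j \<in> {i \<in> I. a i = x}" using \<open>j \<in> J\<close> \<open>a j = x\<close> assms(1) by blast
  ultimately show ?thesis using True assms(3) by (simp add: rho_on_def card_Diff_singleton)
next
  case False
  then have "{i \<in> I - J. a i = x} = {i \<in> I. a i = x}" by auto
  with False show ?thesis by (simp add: rho_on_def)
qed

lemma mu_sum_Suc_le:
  assumes "J \<subseteq> I" "inj_on a J" "finite I"
    and frequent: "\<forall>x\<in>a ` I. Suc l \<le> rho_on I a x \<longrightarrow> x \<in> a ` J"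
  shows "mu_sum (Suc l) I a \<le> mu_sum l (I - J) a + card J"
proof -
  have "min (Suc l) (rho_on I a x) \<le> min l (rho_on (I - J) a x) + of_bool (x \<in> a ` J)"
    if "x \<in> a ` I" for x
    using rho_on_Diff[OF assms(1-3)] frequent that by auto
  then have "mu_sum (Suc l) I a \<le>
      (\<Sum>x\<in>a ` I. min l (rho_on (I - J) a x)) + (\<Sum>x\<in>a ` I. of_bool (x \<in> a ` J))"
    unfolding mu_sum_def sum.distrib[symmetric] by (rule sum_mono)
  also have "(\<Sum>x\<in>a ` I. min l (rho_on (I - J) a x)) = mu_sum l (I - J) a"
  proof (unfold mu_sum_def, intro sum.mono_neutral_right)
    show "\<forall>x\<in>a ` I - a ` (I - J). min l (rho_on (I - J) a x) = 0"
    proof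
      fix x assume "x \<in> a ` I - a ` (I - J)"
      then have "{i \<in> I - J. a i = x} = {}" by blast
      then show "min l (rho_on (I - J) a x) = 0" by (metis card.empty min_0R rho_on_def)
    qed
  qed (use assms(3) in auto)
  also have "(\<Sum>x\<in>a ` I. of_bool (x \<in> a ` J)) = card J"
    using assms by (simp add: card_image Int_absorb1 image_mono)
  finally show ?thesis .
qed

lemma card_frequent_values_mult_le:
  assumes "finite I"
  shows "card {x \<in> a ` I. l \<le> rho_on I a x} * l \<le> card I"
proof -
  let ?R = "{x \<in> a ` I. l \<le> rho_on I a x}"
  have "card ?R * l \<le> (\<Sum>x\<in>?R. card {i \<in> I. a i = x})"
    using sum_mono[of ?R "\<lambda>_. l"] by (simp add: rho_on_def)
  also have "\<dots> = card (\<Union>x\<in>?R. {i \<in> I. a i = x})"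
    using assms by (intro card_UN_disjoint[symmetric]) auto
  also have "\<dots> \<le> card I"
    using assms by (intro card_mono) auto
  finally show ?thesis .
qed

lemma obtain_frequent_values_transversal:
  assumes "finite I" "Suc l \<le> card I"
  obtains J where "J \<subseteq> I" "inj_on a J" "J \<noteq> {}" "card J + l \<le> card I"
    "\<forall>x\<in>a ` I. Suc l \<le> rho_on I a x \<longrightarrow> x \<in> a ` J"
proof (cases "{x \<in> a ` I. Suc l \<le> rho_on I a x} = {}")
  case True
  obtain i where "i \<in> I" using assms by fastforce
  with True assms show thesis using that[of "{i}"] by auto
next
  case False
  then obtain J where J: "J \<subseteq> I" "inj_on a J" "{x \<in> a ` I. Suc l \<le> rho_on I a x} = a ` J"
    using subset_image_inj[of "{x \<in> a ` I. Suc l \<le> rho_on I a x}" a I] by auto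
  with False have "J \<noteq> {}" by auto
  have "card J * Suc l \<le> card I"
    using card_frequent_values_mult_le[OF assms(1), of a "Suc l"] J by (simp add: card_image)
  moreover have "1 \<le> card J" using \<open>J \<noteq> {}\<close> J(1) assms(1) finite_subset
    by (metis One_nat_def Suc_leI card_gt_0_iff)
  then have "card J + l \<le> card J * Suc l" using mult_le_mono1[of 1 "card J" l] by simp
  ultimately have "card J + l \<le> card I" by linarith
  show thesis
    by (rule that[OF J(1,2) \<open>J \<noteq> {}\<close> \<open>card J + l \<le> card I\<close>]) (use J(3) in blast)
qed

lemma min_enat_le_min_enat_shift:
  fixes P :: enat
  assumes "min P (enat (n' - l + 1)) \<le> enat s" "n \<le> n' + j" "1 \<le> j"
  shows "min P (enat (n - Suc l + 1)) \<le> min P (enat (s + j - 1))"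
proof (cases "P \<le> enat s")
  case True
  then have "P \<le> enat (s + j - 1)" using assms(3) order_trans by fastforce
  then show ?thesis by (simp add: min.absorb1 min.coboundedI1)
next
  case False
  with assms(1) have "n' - l + 1 \<le> s" by (simp add: min_le_iff_disj)
  with assms(2,3) have "n - Suc l + 1 \<le> s + j - 1" by linarith
  then show ?thesis by (intro min.mono) simp_all
qed

lemma card_Sigma_on_ge:
  fixes a :: "nat \<Rightarrow> 'a::group_add"
  assumes "finite I" "l \<le> card I"
  shows "min (p_grp TYPE('a)) (enat (mu_sum l I a - l + 1)) \<le> enat (card (Sigma_on l I a))"
  using assms
proof (induction l arbitrary: I)
  case 0
  then show ?case by (simp add: mu_sum_def min.coboundedI2 one_enat_def)
next
  case (Suc l)
  obtain J where J: "J \<subseteq> I" "inj_on a J" "J \<noteq> {}" "card J + l \<le> card I"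
    and frequent: "\<forall>x\<in>a ` I. Suc l \<le> rho_on I a x \<longrightarrow> x \<in> a ` J"
    using obtain_frequent_values_transversal[OF Suc.prems] by blast
  have "finite J" using J(1) Suc.prems(1) finite_subset by blast
  then have "1 \<le> card J" using J(3) by (simp add: Suc_le_eq card_gt_0_iff)
  define S where "S = Sigma_on l (I - J) a"
  have "l \<le> card (I - J)" using J(1,4) \<open>finite J\<close> by (simp add: card_Diff_subset)
  then have IH: "min (p_grp TYPE('a)) (enat (mu_sum l (I - J) a - l + 1)) \<le> enat (card S)"
    unfolding S_def using Suc.IH Suc.prems(1) by blast
  have "min (p_grp TYPE('a)) (enat (card S + card (a ` J) - 1)) \<le> enat (card (S + a ` J))"
    using \<open>finite J\<close> J(3) Suc.prems(1) \<open>l \<le> card (I - J)\<close>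
    by (intro kemperman) (simp_all add: S_def finite_Sigma_on Sigma_on_nonempty)
  also have "\<dots> \<le> enat (card (Sigma_on (Suc l) I a))"
    unfolding S_def enat_ord_simps
    by (rule card_mono[OF finite_Sigma_on[OF Suc.prems(1)] set_plus_image_subset_Sigma_on_Suc[OF J(1)]])
  finally have kemperman_step:
    "min (p_grp TYPE('a)) (enat (card S + card J - 1)) \<le> enat (card (Sigma_on (Suc l) I a))"
    using card_image[OF J(2)] by simp
  have mu_sum_le: "mu_sum (Suc l) I a \<le> mu_sum l (I - J) a + card J"
    using J(1,2) Suc.prems(1) frequent by (rule mu_sum_Suc_le)
  have "min (p_grp TYPE('a)) (enat (mu_sum (Suc l) I a - Suc l + 1))
      \<le> min (p_grp TYPE('a)) (enat (card S + card J - 1))"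
    using IH mu_sum_le \<open>1 \<le> card J\<close> by (rule min_enat_le_min_enat_shift)
  then show ?case using kemperman_step by (rule order_trans)
qed

theorem theorem6p2:
  fixes l m :: nat and a :: "nat \<Rightarrow> 'a::group_add"
  assumes "1 \<le> l" and "l \<le> m"
  shows "enat (card (Sigma_l l m a))
           \<ge> min (p_grp TYPE('a)) (enat ((\<Sum>x\<in>a ` {1..m}. mu l m a x) - l + 1))"
proof -
  have "Sigma_l l m a = Sigma_on l {1..m} a"
    by (simp add: Sigma_l_def Sigma_on_def)
  moreover have "(\<Sum>x\<in>a ` {1..m}. mu l m a x) = mu_sum l {1..m} a"
    by (simp add: mu_def rho_def mu_sum_def rho_on_def)
  ultimately show ?thesis
    using card_Sigma_on_ge[of "{1..m}" l a] assms(2) by simp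
qed

end
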